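(* Let $G$ be a multigraph (loops and parallel edges allowed) and $e$ any edge of $G$. Then $$P(\mathcal{H}_G,\lambda)=\lambda P(\mathcal{H}_{G-e},\lambda)-P(\mathcal{H}_{G/e},\lambda),$$ where $G-e$ is obtained by deleting $e$ and $G/e$ by contracting $e$ (for a loop $e$, $G/e=G-e$).
   Context: A hypergraph $\mathcal{H}=(\mathcal{V},\mathcal{E})$ consists of a finite vertex set $\mathcal{V}$ and a set $\mathcal{E}$ of subsets of $\mathcal{V}$, each of size at least $1$, called edges. For a positive integer $\lambda$, a weak proper $\lambda$-colouring of $\mathcal{H}$ is a map $\phi:\mathcal{V}\to\{1,\dots,\lambda\}$ such that $|\{\phi(v):v\in e\}|>1$ for every $e\in\mathcal{E}$. $P(\mathcal{H},\lambda)$ denotes the number of weak proper $\lambda$-colourings; it is a polynomial in $\lambda$. For a multigraph $G=(V,E)$, $\mathcal{H}_G$ is the hypergraph with vertex set $V\cup\{w_e:e\in E\}$ (distinct new vertices $w_e$) and edge set $\{\{u_e,v_e,w_e\}:e\in E\}$, where $u_e,v_e$ are the ends of $e$. *)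

theory Defs
  imports "HOL-Library.FuncSet"
begin

definition hyp_chrom :: "'v set \<Rightarrow> 'v set set \<Rightarrow> nat \<Rightarrow> nat" where
  "hyp_chrom V E lam =
     card {\<phi> \<in> V \<rightarrow>\<^sub>E {1..lam}. \<forall>e\<in>E. card (\<phi> ` e) > 1}"

text \<open>A multigraph: finite vertex set V, finite edge set E (edge identities of type 'b),
and an ends map giving the two (possibly equal) ends of each edge.\<close>

definition multigraph :: "'a set \<Rightarrow> 'b set \<Rightarrow> ('b \<Rightarrow> 'a \<times> 'a) \<Rightarrow> bool" where
  "multigraph V E ends \<longleftrightarrow> finite V \<and> finite E \<and>
     (\<forall>e\<in>E. fst (ends e) \<in> V \<and> snd (ends e) \<in> V)"

text \<open>The hypergraph H_G: vertices V plus a new vertex w_e = Inr e for every edge e;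
one hyperedge {u_e, v_e, w_e} per edge.\<close>

definition HG_vertices :: "'a set \<Rightarrow> 'b set \<Rightarrow> ('a + 'b) set" where
  "HG_vertices V E = Inl ` V \<union> Inr ` E"

definition HG_edges :: "'b set \<Rightarrow> ('b \<Rightarrow> 'a \<times> 'a) \<Rightarrow> ('a + 'b) set set" where
  "HG_edges E ends = (\<lambda>e. {Inl (fst (ends e)), Inl (snd (ends e)), Inr e}) ` E"

definition PH :: "'a set \<Rightarrow> 'b set \<Rightarrow> ('b \<Rightarrow> 'a \<times> 'a) \<Rightarrow> nat \<Rightarrow> nat" where
  "PH V E ends lam = hyp_chrom (HG_vertices V E) (HG_edges E ends) lam"

text \<open>Contraction of edge e with ends (u,v): if u = v (loop) this is deletion; otherwise
v is merged into u (vertex v removed, every end v renamed to u), and e is removed.\<close>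

definition merge_map :: "'a \<Rightarrow> 'a \<Rightarrow> 'a \<Rightarrow> 'a" where
  "merge_map u v x = (if x = v then u else x)"

definition contract_V :: "'a set \<Rightarrow> ('b \<Rightarrow> 'a \<times> 'a) \<Rightarrow> 'b \<Rightarrow> 'a set" where
  "contract_V V ends e = (if fst (ends e) = snd (ends e) then V else V - {snd (ends e)})"

definition contract_ends :: "('b \<Rightarrow> 'a \<times> 'a) \<Rightarrow> 'b \<Rightarrow> 'b \<Rightarrow> 'a \<times> 'a" where
  "contract_ends ends e f =
     (merge_map (fst (ends e)) (snd (ends e)) (fst (ends f)),
      merge_map (fst (ends e)) (snd (ends e)) (snd (ends f)))"

end

theory Submission
  imports Defs
begin

text \<open>Count the colourings that are proper on every hyperedge except the one of \<open>e = uv\<close>.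
Since \<open>w\<^sub>e\<close> lies in no other hyperedge, its colour is free, so there are \<open>\<lambda> P(\<H>\<^sub>G\<^sub>-\<^sub>e, \<lambda>)\<close>
of them.  Those that are improper on \<open>{u, v, w\<^sub>e}\<close> are determined by their restriction to
\<open>\<H>\<^sub>G\<^sub>-\<^sub>e\<close>, a colouring with \<open>u\<close> and \<open>v\<close> coloured alike, and identifying \<open>v\<close> with \<open>u\<close>
turns these into the colourings of \<open>\<H>\<^sub>G\<^sub>/\<^sub>e\<close>.\<close>

definition proper_on_edge :: "('b \<Rightarrow> 'a \<times> 'a) \<Rightarrow> ('a + 'b \<Rightarrow> nat) \<Rightarrow> 'b \<Rightarrow> bool" where
  "proper_on_edge ends \<phi> f \<longleftrightarrow>
     \<phi> (Inl (fst (ends f))) \<noteq> \<phi> (Inl (snd (ends f))) \<or> \<phi> (Inl (snd (ends f))) \<noteq> \<phi> (Inr f)"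

lemma card_triple_gt_1_iff: "1 < card {a, b, c} \<longleftrightarrow> a \<noteq> b \<or> b \<noteq> c"
  by (cases "a = b"; cases "b = c"; cases "a = c"; simp add: card_insert_if)

lemma PH_eq_card_proper:
  "PH V E ends lam =
     card {\<phi> \<in> (Inl ` V \<union> Inr ` E) \<rightarrow>\<^sub>E {1..lam}. \<forall>f\<in>E. proper_on_edge ends \<phi> f}"
  by (simp add: card_triple_gt_1_iff[simplified] PH_def hyp_chrom_def HG_vertices_def HG_edges_def
      proper_on_edge_def)

lemma card_PiE_insert_free_coordinate:
  assumes "x \<notin> D" and free: "\<And>\<phi> c. P (\<phi>(x := c)) \<longleftrightarrow> P \<phi>"
  shows "card {\<phi> \<in> insert x D \<rightarrow>\<^sub>E C. P \<phi>} = card C * card {\<psi> \<in> D \<rightarrow>\<^sub>E C. P \<psi>}"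
proof -
  let ?ext = "\<lambda>(c, \<psi>). \<psi>(x := c)"
  have "{\<phi> \<in> insert x D \<rightarrow>\<^sub>E C. P \<phi>} = ?ext ` (C \<times> {\<psi> \<in> D \<rightarrow>\<^sub>E C. P \<psi>})"
    unfolding PiE_insert_eq by (auto simp: free)
  moreover have "inj_on ?ext (C \<times> {\<psi> \<in> D \<rightarrow>\<^sub>E C. P \<psi>})"
    using inj_combinator[OF \<open>x \<notin> D\<close>, of "\<lambda>_. C"] by (rule inj_on_subset) auto
  ultimately show ?thesis by (simp add: card_image card_cartesian_product)
qed

lemma card_PiE_insert_identified_coordinate:
  assumes "v \<notin> D" and "u \<in> D"
  shows "card {\<phi> \<in> insert v D \<rightarrow>\<^sub>E C. \<phi> v = \<phi> u \<and> P \<phi>} =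
         card {\<psi> \<in> D \<rightarrow>\<^sub>E C. P (\<psi>(v := \<psi> u))}"
proof -
  let ?ext = "\<lambda>\<psi>. \<psi>(v := \<psi> u)"
  have "u \<noteq> v" using assms by auto
  have "{\<phi> \<in> insert v D \<rightarrow>\<^sub>E C. \<phi> v = \<phi> u \<and> P \<phi>} = ?ext ` {\<psi> \<in> D \<rightarrow>\<^sub>E C. P (?ext \<psi>)}"
    unfolding PiE_insert_eq using \<open>u \<in> D\<close> \<open>u \<noteq> v\<close> by (force simp: PiE_mem)
  moreover have "inj_on ?ext {\<psi> \<in> D \<rightarrow>\<^sub>E C. P (?ext \<psi>)}"
  proof (rule inj_onI, rule ext)
    fix \<psi> \<psi>' w assume "\<psi> \<in> {\<psi> \<in> D \<rightarrow>\<^sub>E C. P (?ext \<psi>)}" "\<psi>' \<in> {\<psi> \<in> D \<rightarrow>\<^sub>E C. P (?ext \<psi>)}"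
      and eq: "?ext \<psi> = ?ext \<psi>'"
    show "\<psi> w = \<psi>' w"
    proof (cases "w = v")
      case True
      have "\<psi> v = undefined" "\<psi>' v = undefined"
        using \<open>\<psi> \<in> _\<close> \<open>\<psi>' \<in> _\<close> \<open>v \<notin> D\<close> by (auto intro: PiE_arb)
      then show ?thesis using True by simp
    next
      case False
      then show ?thesis using fun_cong[OF eq, of w] by simp
    qed
  qed
  ultimately show ?thesis by (simp add: card_image)
qed

lemma proper_on_edge_contract:
  assumes "ends e = (u, v)"
  shows "proper_on_edge ends (\<psi>(Inl v := \<psi> (Inl u))) f \<longleftrightarrow>
         proper_on_edge (contract_ends ends e) \<psi> f"
  using assms by (simp add: proper_on_edge_def contract_ends_def merge_map_def)

lemma contract_loop:
  assumes "fst (ends e) = snd (ends e)"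
  shows "contract_V V ends e = V" and "contract_ends ends e = ends"
  using assms by (auto simp: contract_V_def contract_ends_def merge_map_def fun_eq_iff)

lemma card_colourings_except_edge:
  fixes ends :: "'b \<Rightarrow> 'a \<times> 'a"
  assumes "e \<in> E"
  shows "card {\<phi> \<in> (Inl ` V \<union> Inr ` E) \<rightarrow>\<^sub>E {1..lam}. \<forall>f\<in>E - {e}. proper_on_edge ends \<phi> f} =
         lam * PH V (E - {e}) ends lam"
proof -
  let ?D = "Inl ` V \<union> Inr ` (E - {e})"
  have "Inl ` V \<union> Inr ` E = insert (Inr e) ?D" "Inr e \<notin> ?D"
    using assms by auto
  moreover have "(\<forall>f\<in>E - {e}. proper_on_edge ends (\<phi>(Inr e := c)) f) \<longleftrightarrow>
      (\<forall>f\<in>E - {e}. proper_on_edge ends \<phi> f)" for \<phi> :: "'a + 'b \<Rightarrow> nat" and c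
    by (auto simp: proper_on_edge_def)
  ultimately show ?thesis
    using card_PiE_insert_free_coordinate[of "Inr e" ?D "\<lambda>\<phi>. \<forall>f\<in>E - {e}. proper_on_edge ends \<phi> f"]
    by (simp add: PH_eq_card_proper)
qed

lemma card_monochromatic_extensions:
  fixes ends :: "'b \<Rightarrow> 'a \<times> 'a"
  assumes "e \<in> E" and "ends e = (u, v)" and "u \<in> V"
  defines "D \<equiv> Inl ` V \<union> Inr ` (E - {e})"
  shows "card {\<phi> \<in> (Inl ` V \<union> Inr ` E) \<rightarrow>\<^sub>E C.
                 (\<forall>f\<in>E - {e}. proper_on_edge ends \<phi> f) \<and> \<not> proper_on_edge ends \<phi> e} =
         card {\<psi> \<in> D \<rightarrow>\<^sub>E C. \<psi> (Inl v) = \<psi> (Inl u) \<and> (\<forall>f\<in>E - {e}. proper_on_edge ends \<psi> f)}"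
proof -
  have "Inl ` V \<union> Inr ` E = insert (Inr e) D" "Inr e \<notin> D" "Inl u \<in> D"
    using assms unfolding D_def by auto
  moreover have "(\<forall>f\<in>E - {e}. proper_on_edge ends \<phi> f) \<and> \<not> proper_on_edge ends \<phi> e \<longleftrightarrow>
      \<phi> (Inr e) = \<phi> (Inl u) \<and> \<phi> (Inl v) = \<phi> (Inl u) \<and> (\<forall>f\<in>E - {e}. proper_on_edge ends \<phi> f)"
    for \<phi> using assms(2) by (auto simp: proper_on_edge_def)
  ultimately show ?thesis
    using card_PiE_insert_identified_coordinate[of "Inr e" D "Inl u" C]
    by (simp add: proper_on_edge_def)
qed

lemma card_colourings_identifying_ends:
  fixes ends :: "'b \<Rightarrow> 'a \<times> 'a"
  assumes "e \<in> E" and "ends e = (u, v)" and "u \<in> V" and "v \<in> V"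
  shows "card {\<psi> \<in> (Inl ` V \<union> Inr ` (E - {e})) \<rightarrow>\<^sub>E {1..lam}.
                 \<psi> (Inl v) = \<psi> (Inl u) \<and> (\<forall>f\<in>E - {e}. proper_on_edge ends \<psi> f)} =
         PH (contract_V V ends e) (E - {e}) (contract_ends ends e) lam"
proof (cases "u = v")
  case True
  then show ?thesis using assms(2) contract_loop[of ends e] by (simp add: PH_eq_card_proper)
next
  case False
  let ?D = "Inl ` (V - {v}) \<union> Inr ` (E - {e})"
  have "Inl ` V \<union> Inr ` (E - {e}) = insert (Inl v) ?D" "Inl v \<notin> ?D" "Inl u \<in> ?D"
    using assms False by auto
  moreover have "contract_V V ends e = V - {v}"
    using assms(2) False by (simp add: contract_V_def)
  ultimately show ?thesis
    using card_PiE_insert_identified_coordinate[of "Inl v" ?D "Inl u" "{1..lam}"]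
    by (simp add: proper_on_edge_contract[of ends e u v, OF assms(2)] PH_eq_card_proper)
qed

theorem proposition5:
  fixes V :: "'a set" and E :: "'b set" and ends :: "'b \<Rightarrow> 'a \<times> 'a"
    and e :: 'b and lam :: nat
  assumes "multigraph V E ends" and "e \<in> E" and "lam \<ge> 1"
  shows "int (PH V E ends lam) =
           int lam * int (PH V (E - {e}) ends lam)
           - int (PH (contract_V V ends e) (E - {e}) (contract_ends ends e) lam)"
proof -
  obtain u v where uv: "ends e = (u, v)" by fastforce
  have "finite V" "finite E" and "u \<in> V" "v \<in> V"
    using assms(1,2) uv by (force simp: multigraph_def)+
  define T where "T = {\<phi> \<in> (Inl ` V \<union> Inr ` E) \<rightarrow>\<^sub>E {1..lam}. \<forall>f\<in>E - {e}. proper_on_edge ends \<phi> f}"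
  have "finite T"
    unfolding T_def using \<open>finite V\<close> \<open>finite E\<close> by (simp add: finite_PiE)
  have "{\<phi> \<in> T. proper_on_edge ends \<phi> e} =
      {\<phi> \<in> (Inl ` V \<union> Inr ` E) \<rightarrow>\<^sub>E {1..lam}. \<forall>f\<in>E. proper_on_edge ends \<phi> f}"
    unfolding T_def using assms(2) by blast
  then have "card {\<phi> \<in> T. proper_on_edge ends \<phi> e} = PH V E ends lam"
    by (simp add: PH_eq_card_proper)
  moreover have "card {\<phi> \<in> T. \<not> proper_on_edge ends \<phi> e} =
      PH (contract_V V ends e) (E - {e}) (contract_ends ends e) lam"
    using card_monochromatic_extensions[of e E ends u v V "{1..lam}", OF assms(2) uv \<open>u \<in> V\<close>]
      card_colourings_identifying_ends[of e E ends u v V lam, OF assms(2) uv \<open>u \<in> V\<close> \<open>v \<in> V\<close>]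
    unfolding T_def by simp
  moreover have "card T =
      card {\<phi> \<in> T. proper_on_edge ends \<phi> e} + card {\<phi> \<in> T. \<not> proper_on_edge ends \<phi> e}"
    using \<open>finite T\<close> by (subst card_Un_disjoint[symmetric]) (auto intro: arg_cong[where f = card])
  moreover have "card T = lam * PH V (E - {e}) ends lam"
    unfolding T_def using assms(2) by (rule card_colourings_except_edge)
  ultimately have "PH V E ends lam + PH (contract_V V ends e) (E - {e}) (contract_ends ends e) lam =
      lam * PH V (E - {e}) ends lam"
    by simp
  then show ?thesis by (metis add_diff_cancel_right' of_nat_add of_nat_mult)
qed

end
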